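(* Consider $N$ agents, agent $i\in\{1,\dots,N\}$ having state $x_i(k)\in\mathbb{R}^{n_i}$ with dynamics $x_i(k+1)=A_ix_i(k)+B_iu_i(k)+w_i(k)$, process noise $w_i(k)\sim\mathcal{N}(0,W_i)$, output $y_i(k)=C_ix_i(k)$ with $C_i\in\mathbb{R}^{q_i\times n_i}$, and a reference limit $\bar{x}_i\in\mathbb{R}^{n_i}$. Each agent $i$ chooses $\epsilon_i>0,\delta_i\in(0,1/2)$, $\bar\epsilon_i>0,\bar\delta_i\in(0,1/2)$, adjacency parameters $b_i>0$, $\beta_i>0$, and noise levels $\sigma_i\ge\kappa(\delta_i,\epsilon_i)s_1(C_i)b_i$ and $\bar\sigma_i\ge\kappa(\bar\delta_i,\bar\epsilon_i)\beta_i$. Consider the scheme (Algorithm 1) in which: agent $i$ sends a cloud computer the single value $\tilde{x}_i=\bar{x}_i+\bar{w}_i$, $\bar w_i\sim\mathcal{N}(0,\bar\sigma_i^2I)$; at every time $k$ agent $i$ sends the cloud $\tilde y_i(k)=C_ix_i(k)+v_i(k)$ with $v_i(k)\sim\mathcal{N}(0,\sigma_i^2 I)$ i.i.d. over time and independent of everything else; the cloud, using only these privatized values and public information (the matrices $A_i,B_i,C_i,W_i$, noise variances, privacy parameters, $\mathbb{E}[x_i(0)]$, and cost matrices $Q,R$), computes a Kalman filter state estimate $\hat x(k)$ and the control $u^*(k)=L\hat x(k)+Mg$ (with $L,M,g$ the infinite-horizon LQ tracking gains, $g$ computed from $\tilde x=(\tilde x_1^T,\dots,\tilde x_N^T)^T$)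 and sends $u_i^*(k)$ to agent $i$, which applies it. Then, for every $i$, Algorithm 1 provides $(\epsilon_i,\delta_i)$-differential privacy for agent $i$'s state trajectory $\{x_i(k)\}_{k\in\mathbb{N}}$ (with respect to $\mathrm{Adj}_{b_i}$) and $(\bar\epsilon_i,\bar\delta_i)$-differential privacy for $\bar{x}_i$ (with respect to $\mathrm{Adj}_{\beta_i}$).
   Context: $\mathcal{Q}(y)=\frac{1}{\sqrt{2\pi}}\int_y^\infty e^{-z^2/2}dz$, $K_\delta=\mathcal{Q}^{-1}(\delta)$, and $\kappa(\delta,\epsilon)=\frac{1}{2\epsilon}\big(K_\delta+\sqrt{K_\delta^2+2\epsilon}\big)$; $s_1(\cdot)$ is the largest singular value. Static adjacency: $\mathrm{Adj}_{\beta_i}(r,\bar r)=1$ iff $\|r-\bar r\|_2\le\beta_i$. A mechanism $M$ on $\mathbb{R}^{n_i}$ is $(\epsilon,\delta)$-differentially private if $\mathbb{P}[M(r)\in S]\le e^{\epsilon}\mathbb{P}[M(\bar r)\in S]+\delta$ for all adjacent $r,\bar r$ and all Borel $S$. Trajectory adjacency: for $x_i,x_i'\in\tilde\ell_2^{n_i}$ (sequences whose finite truncations have finite $\ell_2$-norm $\|Z\|_{\ell_2}=(\sum_k\|Z(k)\|_2^2)^{1/2}$), $\mathrm{Adj}_{b_i}(x_i,x_i')=1$ iff $\|x_i-x_i'\|_{\ell_2}\le b_i$. A mechanism $M$ mapping state trajectories to output trajectories is $(\epsilon,\delta)$-differentially private if $\mathbb{P}[M(x_i)\in S]\le e^{\epsilon}\mathbb{P}[M(x_i')\in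 S]+\delta$ for all adjacent $x_i,x_i'$ and all measurable sets $S$ of output trajectories. *)

theory Defs
  imports "HOL-Probability.Probability"
begin

definition Qfun :: "real \<Rightarrow> real" where
  "Qfun y = (1 / sqrt (2 * pi)) * (\<integral>z\<in>{y..}. exp (- (z\<^sup>2) / 2) \<partial>lborel)"

definition Kdelta :: "real \<Rightarrow> real" where
  "Kdelta \<delta> = (THE y. Qfun y = \<delta>)"

definition kappa :: "real \<Rightarrow> real \<Rightarrow> real" where
  "kappa \<delta> \<epsilon> = (1 / (2 * \<epsilon>)) * (Kdelta \<delta> + sqrt ((Kdelta \<delta>)\<^sup>2 + 2 * \<epsilon>))"

definition s1 :: "real^'n^'q \<Rightarrow> real" where
  "s1 C = sqrt (Max {e. \<exists>v. v \<noteq> 0 \<and> (transpose C ** C) *v v = e *\<^sub>R v})"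

definition gauss :: "real^'n \<Rightarrow> real \<Rightarrow> (real^'n) measure" where
  "gauss \<mu> \<sigma> = (if \<sigma> = 0 then return borel \<mu>
     else density lborel (\<lambda>y. \<Prod>j\<in>UNIV. normal_density (\<mu> $ j) \<sigma> (y $ j)))"

definition diff_private ::
  "('a \<Rightarrow> 'a \<Rightarrow> bool) \<Rightarrow> ('a \<Rightarrow> 'b measure) \<Rightarrow> real \<Rightarrow> real \<Rightarrow> bool" where
  "diff_private Adj M \<epsilon> \<delta> \<longleftrightarrow>
     (\<forall>x x'. Adj x x' \<longrightarrow>
        (\<forall>S \<in> sets (M x). measure (M x) S \<le> exp \<epsilon> * measure (M x') S + \<delta>))"

definition Adj_static :: "real \<Rightarrow> real^'n \<Rightarrow> real^'n \<Rightarrow> bool" where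
  "Adj_static \<beta> r r' \<longleftrightarrow> norm (r - r') \<le> \<beta>"

text \<open>Every sequence nat => R^n lies in the extended space tilde-l2 (finite truncations
  always have finite norm), so trajectories are arbitrary sequences.\<close>
definition Adj_traj :: "real \<Rightarrow> (nat \<Rightarrow> real^'n) \<Rightarrow> (nat \<Rightarrow> real^'n) \<Rightarrow> bool" where
  "Adj_traj b x x' \<longleftrightarrow>
     summable (\<lambda>k. (norm (x k - x' k))\<^sup>2) \<and> sqrt (\<Sum>k. (norm (x k - x' k))\<^sup>2) \<le> b"

definition traj_mech :: "real^'n^'q \<Rightarrow> real \<Rightarrow> (nat \<Rightarrow> real^'n) \<Rightarrow> (nat \<Rightarrow> real^'q) measure" where
  "traj_mech C \<sigma> x = PiM UNIV (\<lambda>k. gauss (C *v x k) \<sigma>)"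

definition ref_mech :: "real \<Rightarrow> real^'n \<Rightarrow> (real^'n) measure" where
  "ref_mech \<sigma> r = gauss r \<sigma>"

end

(* For two Gaussians N(mu, sigma^2 I) and N(mu', sigma^2 I) the privacy loss ln (f / f'), observed
   under the first one, is itself normal, namely N(eta, 2 eta) with eta = |mu - mu'|^2 / (2 sigma^2),
   and for products of independent Gaussians these parameters add up.  The loss therefore exceeds
   epsilon with probability Q((epsilon - eta) / sqrt (2 eta)), which is at most delta as soon as
   sqrt (2 eta) <= 1 / kappa(delta, epsilon), because kappa is the positive root of
   2 epsilon k^2 - 2 K_delta k - 1 = 0; and a loss tail of at most delta yields the (epsilon, delta)
   inequality for every event.  On any finite block of the output trajectory the sensitivity is at
   most s1(C) b, so the inequality holds on all cylinder sets.  It extends to the whole product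
   sigma-algebra because measurable sets can be approximated by cylinders simultaneously for both
   product measures, and to every post-processing kernel by integrating it against the kernel. *)

theory Submission
  imports Defs
begin

section \<open>The Gaussian tail function\<close>

abbreviation std_normal :: "real measure" where
  "std_normal \<equiv> density lborel std_normal_density"

interpretation std_normal: real_distribution std_normal
  by (simp add: real_distribution_def real_distribution_axioms_def prob_space_normal_density)

lemma measure_std_normal_singleton: "measure std_normal {x} = 0"
  by (simp add: measure_def emeasure_density nn_integral_null_set)

lemma Qfun_eq_measure: "Qfun y = measure std_normal {y..}"
proof -
  have "measure std_normal {y..}
      = enn2real (\<integral>\<^sup>+z. ennreal (std_normal_density z) * indicator {y..} z \<partial>lborel)"
    by (simp add: measure_def emeasure_density)
  also have "\<dots> = enn2real (\<integral>\<^sup>+z. ennreal (indicator {y..} z * std_normal_density z) \<partial>lborel)"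
    by (intro arg_cong[where f=enn2real] nn_integral_cong) (auto split: split_indicator)
  also have "\<dots> = (\<integral>z\<in>{y..}. std_normal_density z \<partial>lborel)"
    using integrable_mult_indicator[of "{y..}" lborel std_normal_density]
    by (subst nn_integral_eq_integral) (auto simp: set_lebesgue_integral_def)
  also have "\<dots> = Qfun y"
    unfolding Qfun_def std_normal_density_def by (subst set_integral_mult_right[symmetric]) simp
  finally show ?thesis ..
qed

lemma Qfun_eq_1_minus_cdf: "Qfun y = 1 - cdf std_normal y"
proof -
  have "{..y} = {..<y} \<union> {y}" by auto
  then have "cdf std_normal y = measure std_normal {..<y}"
    using std_normal.finite_measure_Union[of "{..<y}" "{y}"] measure_std_normal_singleton
    by (simp add: cdf_def)
  moreover have "measure std_normal {y..} = 1 - measure std_normal {..<y}"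
    using std_normal.prob_compl[of "{..<y}"]
    by (simp add: Compl_eq_Diff_UNIV[symmetric] not_less atLeast_def lessThan_def Collect_neg_eq[symmetric])
  ultimately show ?thesis
    by (simp add: Qfun_eq_measure)
qed

lemma isCont_Qfun: "isCont Qfun x"
  unfolding Qfun_eq_1_minus_cdf[abs_def]
  using std_normal.isCont_cdf measure_std_normal_singleton by (intro continuous_intros) auto

lemma Qfun_strict_antimono:
  assumes "a < b"
  shows "Qfun b < Qfun a"
proof -
  have "\<not> (AE z in lborel. z \<notin> {a<..b})"
    using assms AE_iff_null_sets[of "{a<..b}" lborel] by (simp add: null_sets_def)
  then have "\<not> (AE z in lborel. ennreal (std_normal_density z) * indicator {a<..b} z = 0)"
    by (rule contrapos_nn) (auto elim!: eventually_mono simp: normal_density_pos less_imp_neq[symmetric])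
  then have "emeasure std_normal {a<..b} \<noteq> 0"
    by (simp add: emeasure_density nn_integral_0_iff_AE)
  then have "measure std_normal {a<..b} > 0"
    by (simp add: std_normal.emeasure_eq_measure measure_nonneg order_less_le)
  then show ?thesis
    using std_normal.cdf_diff_eq[OF assms] by (simp add: Qfun_eq_1_minus_cdf)
qed

lemma Qfun_antimono: "a \<le> b \<Longrightarrow> Qfun b \<le> Qfun a"
  using Qfun_strict_antimono[of a b] by (cases "a = b") auto

lemma Qfun_at_top: "(Qfun \<longlongrightarrow> 0) at_top"
  unfolding Qfun_eq_1_minus_cdf[abs_def]
  using std_normal.cdf_lim_at_top_prob by (auto intro!: tendsto_eq_intros)

lemma Qfun_at_bot: "(Qfun \<longlongrightarrow> 1) at_bot"
  unfolding Qfun_eq_1_minus_cdf[abs_def]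
  using std_normal.cdf_lim_at_bot by (auto intro!: tendsto_eq_intros)

lemma Qfun_Kdelta:
  assumes "0 < d" "d < 1"
  shows "Qfun (Kdelta d) = d"
proof -
  obtain b where b: "Qfun b < d"
    using order_tendstoD(2)[OF Qfun_at_top, of d] assms by (auto simp: eventually_at_top_linorder)
  obtain a where a: "a \<le> b" "d < Qfun a"
    using order_tendstoD(1)[OF Qfun_at_bot, of d] assms
    by (auto simp: eventually_at_bot_linorder) (metis min.cobounded1 min.cobounded2)
  obtain y where y: "Qfun y = d"
    using IVT2'[of Qfun b d a] a b isCont_Qfun by (metis continuous_at_imp_continuous_on less_imp_le)
  have "Kdelta d = y"
    unfolding Kdelta_def using y Qfun_strict_antimono
    by (intro the_equality) (auto, metis linorder_neqE_linordered_idom less_irrefl)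
  then show ?thesis using y by simp
qed

lemma prob_ge_normal_eq_Qfun:
  assumes "prob_space P" "distributed P lborel L (normal_density \<mu> s)" "s > 0"
  shows "measure P {x\<in>space P. c \<le> L x} = Qfun ((c - \<mu>) / s)"
proof -
  interpret prob_space P by fact
  have standardized: "distributed P lborel (\<lambda>x. (L x - \<mu>) / s) std_normal_density"
    using assms(2) normal_standard_normal_convert[OF assms(3)] by simp
  have "{x\<in>space P. c \<le> L x} = (\<lambda>x. (L x - \<mu>) / s) -` {(c - \<mu>) / s..} \<inter> space P"
    using assms(3) by (auto simp: divide_le_cancel le_diff_eq)
  then have "measure P {x\<in>space P. c \<le> L x}
      = measure (distr P lborel (\<lambda>x. (L x - \<mu>) / s)) {(c - \<mu>) / s..}"
    using standardized by (subst measure_distr) (auto dest: distributed_measurable)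
  also have "\<dots> = measure std_normal {(c - \<mu>) / s..}"
    using standardized by (simp add: distributed_def)
  finally show ?thesis
    by (simp add: Qfun_eq_measure)
qed

lemma
  assumes "\<epsilon> > 0"
  shows kappa_pos: "kappa \<delta> \<epsilon> > 0"
    and kappa_root: "\<epsilon> * kappa \<delta> \<epsilon> - 1 / (2 * kappa \<delta> \<epsilon>) = Kdelta \<delta>"
proof -
  define K where "K = Kdelta \<delta>"
  define r where "r = sqrt (K\<^sup>2 + 2 * \<epsilon>)"
  have r2: "r\<^sup>2 = K\<^sup>2 + 2 * \<epsilon>"
    unfolding r_def using assms by simp
  have "sqrt (K\<^sup>2) < r"
    unfolding r_def using assms by (intro real_sqrt_less_mono) simp
  then have Kr: "K + r > 0"
    by (simp add: abs_less_iff)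
  have k: "kappa \<delta> \<epsilon> = (K + r) / (2 * \<epsilon>)"
    unfolding kappa_def K_def r_def by simp
  show "kappa \<delta> \<epsilon> > 0"
    using k Kr assms by simp
  have "(r - K) * (K + r) = 2 * \<epsilon>"
    using r2 by (simp add: algebra_simps power2_eq_square)
  then have "1 / (2 * kappa \<delta> \<epsilon>) = (r - K) / 2"
    unfolding k using Kr assms by (simp add: field_simps)
  moreover have "\<epsilon> * kappa \<delta> \<epsilon> = (K + r) / 2"
    unfolding k using assms by simp
  ultimately show "\<epsilon> * kappa \<delta> \<epsilon> - 1 / (2 * kappa \<delta> \<epsilon>) = Kdelta \<delta>"
    by (simp add: K_def field_simps)
qed

lemma Qfun_le_if_le_inverse_kappa:
  assumes "\<epsilon> > 0" "0 < \<delta>" "\<delta> < 1" "0 < s" "s \<le> 1 / kappa \<delta> \<epsilon>"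
  shows "Qfun (\<epsilon> / s - s / 2) \<le> \<delta>"
proof -
  define k where "k = kappa \<delta> \<epsilon>"
  have k: "k > 0" "k \<le> 1 / s"
    using kappa_pos[OF assms(1)] assms(4,5) by (simp_all add: k_def field_simps)
  then have "\<epsilon> * k \<le> \<epsilon> / s"
    using assms(1) by (simp add: mult_left_mono divide_inverse)
  moreover have "s / 2 \<le> 1 / (2 * k)"
    using assms(5) by (simp add: k_def)
  ultimately have "Kdelta \<delta> \<le> \<epsilon> / s - s / 2"
    using kappa_root[OF assms(1), of \<delta>] by (simp add: k_def)
  then have "Qfun (\<epsilon> / s - s / 2) \<le> Qfun (Kdelta \<delta>)"
    by (rule Qfun_antimono)
  then show ?thesis
    using Qfun_Kdelta assms(2,3) by simp
qed

section \<open>Approximate indistinguishability and Gaussian privacy loss\<close>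

definition dp_indist :: "'a measure \<Rightarrow> 'a measure \<Rightarrow> real \<Rightarrow> real \<Rightarrow> bool" where
  "dp_indist P Q \<epsilon> \<delta> \<longleftrightarrow> (\<forall>S\<in>sets P. measure P S \<le> exp \<epsilon> * measure Q S + \<delta>)"

lemma diff_private_iff_dp_indist:
  "diff_private Adj M \<epsilon> \<delta> \<longleftrightarrow> (\<forall>x x'. Adj x x' \<longrightarrow> dp_indist (M x) (M x') \<epsilon> \<delta>)"
  by (simp add: diff_private_def dp_indist_def)

lemma dp_indist_refl:
  assumes "\<epsilon> \<ge> 0" "\<delta> \<ge> 0"
  shows "dp_indist P P \<epsilon> \<delta>"
  unfolding dp_indist_def
proof
  fix S
  have "measure P S \<le> exp \<epsilon> * measure P S"
    using assms by (simp add: mult_le_cancel_right1)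
  then show "measure P S \<le> exp \<epsilon> * measure P S + \<delta>"
    using assms by simp
qed

lemma measure_density_le_on_ratio_set:
  fixes f g :: "'a \<Rightarrow> real"
  assumes [measurable]: "f \<in> borel_measurable N" "g \<in> borel_measurable N" "S \<in> sets N"
    and "c \<ge> 0" "finite_measure (density N f)" "finite_measure (density N g)"
  shows "measure (density N f) (S \<inter> {x\<in>space N. f x \<le> c * g x}) \<le> c * measure (density N g) S"
proof -
  interpret P: finite_measure "density N f" by fact
  interpret Q: finite_measure "density N g" by fact
  have "emeasure (density N f) (S \<inter> {x\<in>space N. f x \<le> c * g x})
      = (\<integral>\<^sup>+x. ennreal (f x) * indicator (S \<inter> {x\<in>space N. f x \<le> c * g x}) x \<partial>N)"
    by (simp add: emeasure_density)
  also have "\<dots> \<le> (\<integral>\<^sup>+x. ennreal c * (ennreal (g x) * indicator S x) \<partial>N)"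
    using \<open>c \<ge> 0\<close> by (intro nn_integral_mono)
      (auto simp: ennreal_mult'[symmetric] split: split_indicator intro!: ennreal_leI)
  also have "\<dots> = ennreal c * emeasure (density N g) S"
    by (simp add: emeasure_density nn_integral_cmult)
  finally show ?thesis
    using \<open>c \<ge> 0\<close>
    by (simp add: P.emeasure_eq_measure Q.emeasure_eq_measure ennreal_mult[symmetric] ennreal_le_iff)
qed

lemma dp_indist_density_if_loss_tail:
  fixes f g :: "'a \<Rightarrow> real"
  assumes [measurable]: "f \<in> borel_measurable N" "g \<in> borel_measurable N"
    and pos: "\<And>x. x \<in> space N \<Longrightarrow> f x > 0 \<and> g x > 0"
    and fin: "finite_measure (density N f)" "finite_measure (density N g)"
    and tail: "measure (density N f) {x\<in>space N. \<epsilon> < ln (f x / g x)} \<le> \<delta>"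
  shows "dp_indist (density N f) (density N g) \<epsilon> \<delta>"
  unfolding dp_indist_def
proof
  interpret P: finite_measure "density N f" by fact
  fix S assume "S \<in> sets (density N f)"
  then have S[measurable]: "S \<in> sets N" by simp
  define A where "A = {x\<in>space N. f x \<le> exp \<epsilon> * g x}"
  have A[measurable]: "A \<in> sets N"
    unfolding A_def by measurable
  have "\<epsilon> < ln (f x / g x) \<longleftrightarrow> exp \<epsilon> * g x < f x" if "x \<in> space N" for x
  proof -
    have "\<epsilon> < ln (f x / g x) \<longleftrightarrow> exp \<epsilon> < f x / g x"
      using pos[OF that] by (metis divide_pos_pos exp_less_cancel_iff exp_ln)
    then show ?thesis
      using pos[OF that] by (simp add: pos_less_divide_eq)
  qed
  then have "{x\<in>space N. \<epsilon> < ln (f x / g x)} = space N - A"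
    unfolding A_def by auto
  moreover have "measure (density N f) (S - A) \<le> measure (density N f) (space N - A)"
    using sets.sets_into_space[OF S] by (intro P.finite_measure_mono) auto
  ultimately have "measure (density N f) (S - A) \<le> \<delta>"
    using tail by simp
  moreover have "measure (density N f) (S \<inter> A) \<le> exp \<epsilon> * measure (density N g) S"
    unfolding A_def using fin by (intro measure_density_le_on_ratio_set) auto
  moreover have "measure (density N f) S = measure (density N f) (S \<inter> A) + measure (density N f) (S - A)"
    by (subst P.finite_measure_Union[symmetric]) (auto intro!: arg_cong[where f="measure _"])
  ultimately show "measure (density N f) S \<le> exp \<epsilon> * measure (density N g) S + \<delta>"
    by linarith
qed

definition gaussian_loss :: "'a measure \<Rightarrow> ('a \<Rightarrow> real) \<Rightarrow> ('a \<Rightarrow> real) \<Rightarrow> real \<Rightarrow> bool" where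
  "gaussian_loss N f g \<eta> \<longleftrightarrow> f \<in> borel_measurable N \<and> g \<in> borel_measurable N \<and>
     (\<forall>x\<in>space N. f x > 0 \<and> g x > 0) \<and> prob_space (density N f) \<and> prob_space (density N g) \<and>
     \<eta> \<ge> 0 \<and> (\<eta> = 0 \<longrightarrow> (\<forall>x\<in>space N. f x = g x)) \<and>
     (\<eta> > 0 \<longrightarrow> distributed (density N f) lborel (\<lambda>x. ln (f x / g x)) (normal_density \<eta> (sqrt (2 * \<eta>))))"

lemma dp_indist_if_gaussian_loss:
  assumes loss: "gaussian_loss N f g \<eta>" and "\<epsilon> > 0" "0 < \<delta>" "\<delta> < 1"
    and small: "sqrt (2 * \<eta>) \<le> 1 / kappa \<delta> \<epsilon>"
  shows "dp_indist (density N f) (density N g) \<epsilon> \<delta>"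
proof -
  note L = loss[unfolded gaussian_loss_def]
  note [measurable] = L[THEN conjunct1] L[THEN conjunct2, THEN conjunct1]
  show ?thesis
  proof (cases "\<eta> = 0")
    case True
    then have "density N f = density N g"
      using L by (intro density_cong) (auto simp: AE_measure)
    then show ?thesis
      using assms by (simp add: dp_indist_refl)
  next
    case False
    interpret P: prob_space "density N f"
      using L by blast
    define s where "s = sqrt (2 * \<eta>)"
    have s: "s > 0" "\<eta> = s\<^sup>2 / 2"
      using False L by (auto simp: s_def)
    have loss_normal: "distributed (density N f) lborel (\<lambda>x. ln (f x / g x)) (normal_density \<eta> s)"
      using False L unfolding s_def by simp
    have "measure (density N f) {x\<in>space N. \<epsilon> < ln (f x / g x)}
        \<le> measure (density N f) {x\<in>space (density N f). \<epsilon> \<le> ln (f x / g x)}"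
      by (intro P.finite_measure_mono) auto
    also have "\<dots> = Qfun ((\<epsilon> - \<eta>) / s)"
      by (rule prob_ge_normal_eq_Qfun[OF P.prob_space_axioms loss_normal s(1)])
    also have "(\<epsilon> - \<eta>) / s = \<epsilon> / s - s / 2"
      using s by (simp add: field_simps power2_eq_square)
    also have "Qfun \<dots> \<le> \<delta>"
      using Qfun_le_if_le_inverse_kappa[OF assms(2-4) s(1)] small by (simp add: s_def)
    finally show ?thesis
      using L by (intro dp_indist_density_if_loss_tail) (simp_all add: prob_space.finite_measure)
  qed
qed

lemma gaussian_loss_normal:
  assumes "\<sigma> > 0"
  shows "gaussian_loss lborel (normal_density a \<sigma>) (normal_density a' \<sigma>) ((a - a')\<^sup>2 / (2 * \<sigma>\<^sup>2))"
proof -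
  define \<eta> where "\<eta> = (a - a')\<^sup>2 / (2 * \<sigma>\<^sup>2)"
  define \<alpha> where "\<alpha> = (a - a') / \<sigma>\<^sup>2"
  define \<beta> where "\<beta> = (a'\<^sup>2 - a\<^sup>2) / (2 * \<sigma>\<^sup>2)"
  have loss_affine: "ln (normal_density a \<sigma> y / normal_density a' \<sigma> y) = \<beta> + \<alpha> * y" for y
    using assms by (simp add: normal_density_def \<alpha>_def \<beta>_def exp_diff[symmetric] field_simps power2_eq_square)
  have "distributed (density lborel (normal_density a \<sigma>)) lborel
      (\<lambda>y. ln (normal_density a \<sigma> y / normal_density a' \<sigma> y)) (normal_density \<eta> (sqrt (2 * \<eta>)))"
    if "\<eta> > 0"
  proof -
    interpret prob_space "density lborel (normal_density a \<sigma>)"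
      using prob_space_normal_density assms by simp
    have "distributed (density lborel (normal_density a \<sigma>)) lborel (\<lambda>y. y) (normal_density a \<sigma>)"
      by (simp add: distributed_def distr_id2)
    moreover have "\<alpha> \<noteq> 0"
      using that assms by (auto simp: \<alpha>_def \<eta>_def)
    ultimately have "distributed (density lborel (normal_density a \<sigma>)) lborel (\<lambda>y. \<beta> + \<alpha> * y)
        (normal_density (\<beta> + \<alpha> * a) (\<bar>\<alpha>\<bar> * \<sigma>))"
      using assms by (intro normal_density_affine)
    moreover have "\<beta> + \<alpha> * a = \<eta>"
      using assms by (simp add: \<alpha>_def \<beta>_def \<eta>_def field_simps power2_eq_square)
    moreover have "\<bar>\<alpha>\<bar> * \<sigma> = sqrt (2 * \<eta>)"
      using assms by (simp add: \<alpha>_def \<eta>_def real_sqrt_divide abs_div power2_eq_square real_sqrt_mult)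
    ultimately show ?thesis
      unfolding loss_affine by simp
  qed
  then show ?thesis
    unfolding gaussian_loss_def \<eta>_def[symmetric]
    using assms prob_space_normal_density by (auto simp: normal_density_pos \<eta>_def)
qed

lemma PiM_density:
  fixes f :: "'i \<Rightarrow> 'a \<Rightarrow> real"
  assumes N: "product_sigma_finite N" and fin: "finite I"
    and [measurable]: "\<And>i. f i \<in> borel_measurable (N i)"
    and f_nonneg: "\<And>i x. x \<in> space (N i) \<Longrightarrow> f i x \<ge> 0"
    and sigma_finite: "\<And>i. sigma_finite_measure (density (N i) (f i))"
  shows "PiM I (\<lambda>i. density (N i) (f i)) = density (PiM I N) (\<lambda>x. \<Prod>i\<in>I. f i (x i))"
proof -
  interpret N: product_sigma_finite N by fact
  interpret D: product_sigma_finite "\<lambda>i. density (N i) (f i)"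
    unfolding product_sigma_finite_def using sigma_finite by blast
  show ?thesis
  proof (rule D.PiM_eqI[symmetric, OF fin])
    show "sets (density (PiM I N) (\<lambda>x. \<Prod>i\<in>I. f i (x i))) = sets (PiM I (\<lambda>i. density (N i) (f i)))"
      unfolding sets_density by (rule sets_PiM_cong) auto
    fix A assume A: "\<And>i. i \<in> I \<Longrightarrow> A i \<in> sets (density (N i) (f i))"
    then have A': "\<And>i. i \<in> I \<Longrightarrow> A i \<in> sets (N i)" by simp
    have "emeasure (density (PiM I N) (\<lambda>x. \<Prod>i\<in>I. f i (x i))) (Pi\<^sub>E I A)
      = (\<integral>\<^sup>+x. ennreal (\<Prod>i\<in>I. f i (x i)) * indicator (Pi\<^sub>E I A) x \<partial>PiM I N)"
      using A' by (intro emeasure_density) (auto intro!: sets_PiM_I_finite fin)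
    also have "\<dots> = (\<integral>\<^sup>+x. (\<Prod>i\<in>I. ennreal (f i (x i)) * indicator (A i) (x i)) \<partial>PiM I N)"
    proof (intro nn_integral_cong)
      fix x assume x: "x \<in> space (PiM I N)"
      then have xs: "\<And>i. i \<in> I \<Longrightarrow> x i \<in> space (N i)" by (auto simp: space_PiM)
      have "indicator (Pi\<^sub>E I A) x = (\<Prod>i\<in>I. indicator (A i) (x i) :: ennreal)"
        using x fin by (auto simp: space_PiM indicator_def PiE_iff prod_ennreal)
      moreover have "ennreal (\<Prod>i\<in>I. f i (x i)) = (\<Prod>i\<in>I. ennreal (f i (x i)))"
        using xs f_nonneg by (simp add: prod_ennreal)
      ultimately show "ennreal (\<Prod>i\<in>I. f i (x i)) * indicator (Pi\<^sub>E I A) x =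
          (\<Prod>i\<in>I. ennreal (f i (x i)) * indicator (A i) (x i))"
        by (simp add: prod.distrib)
    qed
    also have "\<dots> = (\<Prod>i\<in>I. \<integral>\<^sup>+y. ennreal (f i y) * indicator (A i) y \<partial>N i)"
      using A' by (intro N.product_nn_integral_prod fin) auto
    also have "\<dots> = (\<Prod>i\<in>I. emeasure (density (N i) (f i)) (A i))"
      using A' by (intro prod.cong refl) (simp add: emeasure_density)
    finally show "emeasure (density (PiM I N) (\<lambda>x. \<Prod>i\<in>I. f i (x i))) (Pi\<^sub>E I A) =
        (\<Prod>i\<in>I. emeasure (density (N i) (f i)) (A i))" .
  qed
qed

lemma distributed_cong_rv:
  assumes "\<And>x. x \<in> space M \<Longrightarrow> X x = Y x" and "distributed M N X f"
  shows "distributed M N Y f"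
  using assms distr_cong[OF refl refl, of M X Y N] measurable_cong[of M X Y N]
  unfolding distributed_def by auto

lemma indep_vars_PiM_components:
  assumes "I \<noteq> {}" and Q: "\<And>i. i \<in> I \<Longrightarrow> prob_space (Q i)"
  shows "prob_space.indep_vars (PiM I Q) Q (\<lambda>i x. x i) I"
proof -
  interpret prob_space "PiM I Q"
    using Q by (intro prob_space_PiM) auto
  show ?thesis
  proof (subst indep_vars_iff_distr_eq_PiM'[OF assms(1)])
    show "random_variable (Q i) (\<lambda>x. x i)" if "i \<in> I" for i
      using that by simp
    have "distr (PiM I Q) (PiM I Q) (\<lambda>x. \<lambda>i\<in>I. x i) = distr (PiM I Q) (PiM I Q) (\<lambda>x. x)"
      by (intro distr_cong) (auto simp: space_PiM)
    also have "\<dots> = PiM I (\<lambda>i. distr (PiM I Q) (Q i) (\<lambda>x. x i))"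
      using Q by (simp add: distr_PiM_component cong: PiM_cong)
    finally show "distr (PiM I Q) (PiM I Q) (\<lambda>x. \<lambda>i\<in>I. x i) = PiM I (\<lambda>i. distr (PiM I Q) (Q i) (\<lambda>x. x i))" .
  qed
qed

lemma distributed_sum_PiM_normal:
  fixes X :: "'i \<Rightarrow> 'a \<Rightarrow> real"
  assumes "J \<subseteq> I" "finite J" "J \<noteq> {}"
    and Q: "\<And>i. i \<in> I \<Longrightarrow> prob_space (Q i)"
    and X: "\<And>i. i \<in> J \<Longrightarrow> distributed (Q i) lborel (X i) (normal_density (\<mu> i) (s i))"
    and s: "\<And>i. i \<in> J \<Longrightarrow> s i > 0"
  shows "distributed (PiM I Q) lborel (\<lambda>x. \<Sum>i\<in>J. X i (x i))
    (normal_density (\<Sum>i\<in>J. \<mu> i) (sqrt (\<Sum>i\<in>J. (s i)\<^sup>2)))"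
proof -
  interpret prob_space "PiM I Q"
    using Q by (intro prob_space_PiM) auto
  have [measurable]: "X i \<in> borel_measurable (Q i)" if "i \<in> J" for i
    using distributed_measurable[OF X[OF that]] by simp
  have "indep_vars Q (\<lambda>i x. x i) J"
    using indep_vars_PiM_components[of I Q] assms(1,3) Q by (auto intro: indep_vars_subset)
  then have "indep_vars (\<lambda>_. borel) (\<lambda>i x. X i (x i)) J"
    by (rule indep_vars_compose2) simp
  moreover have "distributed (PiM I Q) lborel (\<lambda>x. X i (x i)) (normal_density (\<mu> i) (s i))" if "i \<in> J" for i
  proof -
    have i: "i \<in> I"
      using that assms(1) by auto
    have "distr (PiM I Q) lborel (\<lambda>x. X i (x i)) = distr (distr (PiM I Q) (Q i) (\<lambda>x. x i)) lborel (X i)"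
      using i that by (subst distr_distr) (auto simp: comp_def)
    also have "\<dots> = distr (Q i) lborel (X i)"
      using Q i by (simp add: distr_PiM_component)
    finally show ?thesis
      using X[OF that] i that unfolding distributed_def by auto
  qed
  ultimately show ?thesis
    using assms(2,3) s by (intro sum_indep_normal) auto
qed

lemma distributed_loss_PiM:
  fixes f g :: "'i \<Rightarrow> 'a \<Rightarrow> real"
  assumes fin: "finite I" and loss: "\<And>i. gaussian_loss (N i) (f i) (g i) (\<eta> i)" and pos: "(\<Sum>i\<in>I. \<eta> i) > 0"
  shows "distributed (PiM I (\<lambda>i. density (N i) (f i))) lborel
      (\<lambda>x. ln ((\<Prod>i\<in>I. f i (x i)) / (\<Prod>i\<in>I. g i (x i))))
      (normal_density (\<Sum>i\<in>I. \<eta> i) (sqrt (2 * (\<Sum>i\<in>I. \<eta> i))))"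
proof -
  note L = loss[unfolded gaussian_loss_def]
  have \<eta>_nonneg: "\<eta> i \<ge> 0" for i
    using L by blast
  define J where "J = {i\<in>I. \<eta> i > 0}"
  have J: "J \<subseteq> I" "finite J" "J \<noteq> {}"
    using pos fin \<eta>_nonneg unfolding J_def
    by (auto, metis (mono_tags, lifting) order_less_le sum_nonneg_eq_0_iff)
  have sum_J: "(\<Sum>i\<in>J. \<eta> i) = (\<Sum>i\<in>I. \<eta> i)"
    using fin \<eta>_nonneg unfolding J_def by (intro sum.mono_neutral_left) (auto simp: order_less_le)
  have loss_eq: "ln ((\<Prod>i\<in>I. f i (x i)) / (\<Prod>i\<in>I. g i (x i))) = (\<Sum>i\<in>J. ln (f i (x i) / g i (x i)))"
    if x: "x \<in> space (PiM I (\<lambda>i. density (N i) (f i)))" for x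
  proof -
    have x_space: "x i \<in> space (N i)" if "i \<in> I" for i
      using x that by (auto simp: space_PiM)
    then have ratio_pos: "f i (x i) / g i (x i) > 0" if "i \<in> I" for i
      using L that by simp
    have "ln ((\<Prod>i\<in>I. f i (x i)) / (\<Prod>i\<in>I. g i (x i))) = ln (\<Prod>i\<in>I. f i (x i) / g i (x i))"
      by (simp add: prod_dividef)
    also have "\<dots> = (\<Sum>i\<in>I. ln (f i (x i) / g i (x i)))"
      using ratio_pos by (intro ln_prod fin) (metis less_irrefl)
    also have "\<dots> = (\<Sum>i\<in>J. ln (f i (x i) / g i (x i)))"
    proof (rule sum.mono_neutral_right[OF fin J(1)], rule ballI)
      fix i assume "i \<in> I - J"
      then have "\<eta> i = 0" "i \<in> I"
        using \<eta>_nonneg by (auto simp: J_def order_less_le)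
      then show "ln (f i (x i) / g i (x i)) = 0"
        using L ratio_pos[of i] x_space by auto
    qed
    finally show ?thesis .
  qed
  have "distributed (PiM I (\<lambda>i. density (N i) (f i))) lborel (\<lambda>x. \<Sum>i\<in>J. ln (f i (x i) / g i (x i)))
      (normal_density (\<Sum>i\<in>J. \<eta> i) (sqrt (\<Sum>i\<in>J. (sqrt (2 * \<eta> i))\<^sup>2)))"
    using L J by (intro distributed_sum_PiM_normal) (auto simp: J_def)
  moreover have "(\<Sum>i\<in>J. (sqrt (2 * \<eta> i))\<^sup>2) = 2 * (\<Sum>i\<in>I. \<eta> i)"
    using \<eta>_nonneg sum_J by (simp add: sum_distrib_left[symmetric])
  ultimately show ?thesis
    unfolding sum_J by (intro distributed_cong_rv[OF loss_eq[symmetric]]) auto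
qed

lemma gaussian_loss_PiM:
  fixes f g :: "'i \<Rightarrow> 'a \<Rightarrow> real"
  assumes N: "product_sigma_finite N" and fin: "finite I"
    and loss: "\<And>i. gaussian_loss (N i) (f i) (g i) (\<eta> i)"
  shows "gaussian_loss (PiM I N) (\<lambda>x. \<Prod>i\<in>I. f i (x i)) (\<lambda>x. \<Prod>i\<in>I. g i (x i)) (\<Sum>i\<in>I. \<eta> i)"
proof -
  note L = loss[unfolded gaussian_loss_def]
  have [measurable]: "\<And>i. f i \<in> borel_measurable (N i)" "\<And>i. g i \<in> borel_measurable (N i)"
    using L by auto
  have f_pos: "\<And>i x. x \<in> space (N i) \<Longrightarrow> f i x > 0" and g_pos: "\<And>i x. x \<in> space (N i) \<Longrightarrow> g i x > 0"
    and \<eta>_nonneg: "\<And>i. \<eta> i \<ge> 0"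
    using L by auto
  have space: "\<And>x i. x \<in> space (PiM I N) \<Longrightarrow> i \<in> I \<Longrightarrow> x i \<in> space (N i)"
    by (auto simp: space_PiM)
  have PiM_f: "PiM I (\<lambda>i. density (N i) (f i)) = density (PiM I N) (\<lambda>x. \<Prod>i\<in>I. f i (x i))"
    using N fin f_pos L by (intro PiM_density) (auto simp: less_imp_le prob_space_imp_sigma_finite)
  have PiM_g: "PiM I (\<lambda>i. density (N i) (g i)) = density (PiM I N) (\<lambda>x. \<Prod>i\<in>I. g i (x i))"
    using N fin g_pos L by (intro PiM_density) (auto simp: less_imp_le prob_space_imp_sigma_finite)
  have "\<forall>x\<in>space (PiM I N). (\<Prod>i\<in>I. f i (x i)) = (\<Prod>i\<in>I. g i (x i))"
    if "(\<Sum>i\<in>I. \<eta> i) = 0"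
  proof -
    have "\<forall>i\<in>I. \<eta> i = 0"
      using that sum_nonneg_eq_0_iff[OF fin] \<eta>_nonneg by blast
    then show ?thesis
      using L space by (auto intro!: prod.cong)
  qed
  moreover have "prob_space (density (PiM I N) (\<lambda>x. \<Prod>i\<in>I. f i (x i)))"
    unfolding PiM_f[symmetric] using L by (intro prob_space_PiM) auto
  moreover have "prob_space (density (PiM I N) (\<lambda>x. \<Prod>i\<in>I. g i (x i)))"
    unfolding PiM_g[symmetric] using L by (intro prob_space_PiM) auto
  moreover have "\<forall>x\<in>space (PiM I N). (\<Prod>i\<in>I. f i (x i)) > 0 \<and> (\<Prod>i\<in>I. g i (x i)) > 0"
    using f_pos g_pos space by (auto intro!: prod_pos)
  moreover have "distributed (density (PiM I N) (\<lambda>x. \<Prod>i\<in>I. f i (x i))) lborel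
      (\<lambda>x. ln ((\<Prod>i\<in>I. f i (x i)) / (\<Prod>i\<in>I. g i (x i))))
      (normal_density (\<Sum>i\<in>I. \<eta> i) (sqrt (2 * (\<Sum>i\<in>I. \<eta> i))))"
    if "(\<Sum>i\<in>I. \<eta> i) > 0"
    unfolding PiM_f[symmetric] using fin loss that by (rule distributed_loss_PiM)
  ultimately show ?thesis
    unfolding gaussian_loss_def using \<eta>_nonneg by (auto intro: sum_nonneg)
qed

lemma measurable_vec_lambda_PiM[measurable]:
  "(\<lambda>f. \<chi> j. f j) \<in> measurable (PiM UNIV (\<lambda>_::'n::finite. lborel)) (borel :: (real^'n) measure)"
proof (subst borel_measurable_euclidean_space, intro ballI)
  fix b :: "real^'n" assume "b \<in> Basis"
  then obtain j where b: "b = axis j 1"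
    using axis_inverse by blast
  show "(\<lambda>f. (\<chi> j. f j) \<bullet> b) \<in> borel_measurable (PiM UNIV (\<lambda>_::'n. lborel))"
    unfolding b inner_axis by simp
qed

lemma product_sigma_finite_lborel: "product_sigma_finite (\<lambda>_. lborel :: 'a::euclidean_space measure)"
  by (simp add: product_sigma_finite_def lborel.sigma_finite_measure_axioms)

lemma lborel_vec_eq_distr_PiM:
  "(lborel :: (real^'n::finite) measure) = distr (PiM UNIV (\<lambda>_::'n. lborel)) borel (\<lambda>f. \<chi> j. f j)"
proof (rule lborel_eqI)
  fix l u :: "real^'n" assume "\<And>b. b \<in> Basis \<Longrightarrow> l \<bullet> b \<le> u \<bullet> b"
  then have le: "\<And>j. l $ j \<le> u $ j"
    by (metis cart_eq_inner_axis axis_in_Basis_iff Basis_real_def insertI1)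
  have Basis_vec: "(Basis :: (real^'n) set) = range (\<lambda>j. axis j 1)"
    by (auto simp: Basis_vec_def)
  have "(\<lambda>f. \<chi> j. f j) -` box l u \<inter> space (PiM UNIV (\<lambda>_::'n. lborel)) = Pi\<^sub>E UNIV (\<lambda>j. {l $ j <..< u $ j})"
    by (auto simp: space_PiM mem_box_cart PiE_iff)
  then have "emeasure (distr (PiM UNIV (\<lambda>_::'n. lborel)) borel (\<lambda>f. \<chi> j. f j)) (box l u)
      = emeasure (PiM UNIV (\<lambda>_::'n. lborel)) (Pi\<^sub>E UNIV (\<lambda>j. {l $ j <..< u $ j}))"
    by (subst emeasure_distr) auto
  also have "\<dots> = (\<Prod>j\<in>UNIV. ennreal (u $ j - l $ j))"
    using le by (subst product_sigma_finite.emeasure_PiM[OF product_sigma_finite_lborel]) auto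
  also have "\<dots> = ennreal (\<Prod>j\<in>UNIV. u $ j - l $ j)"
    using le by (simp add: prod_ennreal)
  also have "(\<Prod>j\<in>UNIV. u $ j - l $ j) = (\<Prod>b\<in>Basis. (u - l) \<bullet> b)"
  proof -
    have "inj (\<lambda>j::'n. axis j (1::real))"
      by (auto simp: inj_on_def axis_eq_axis)
    then show ?thesis
      unfolding Basis_vec by (subst prod.reindex) (auto simp: inner_axis)
  qed
  finally show "emeasure (distr (PiM UNIV (\<lambda>_::'n. lborel)) borel (\<lambda>f. \<chi> j. f j)) (box l u)
      = (\<Prod>b\<in>Basis. (u - l) \<bullet> b)" .
qed simp

lemma density_distr_eq_distr_density:
  assumes [measurable]: "T \<in> measurable N M" "f \<in> borel_measurable N" "f' \<in> borel_measurable M"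
    and "\<And>x. x \<in> space N \<Longrightarrow> f' (T x) = f x"
  shows "density (distr N M T) f' = distr (density N f) M T"
proof -
  have "density (distr N M T) f' = distr (density N (\<lambda>x. f' (T x))) M T"
    by (subst density_distr) (auto simp: comp_def)
  also have "density N (\<lambda>x. f' (T x)) = density N f"
    using assms(4) by (intro density_cong) (auto simp: AE_measure)
  finally show ?thesis .
qed

lemma gaussian_loss_distr:
  fixes f g :: "'a \<Rightarrow> real" and f' g' :: "'b \<Rightarrow> real"
  assumes loss: "gaussian_loss N f g \<eta>" and M: "M = distr N M' T" and [measurable]: "T \<in> measurable N M'"
    and f'[measurable]: "f' \<in> borel_measurable M" and g'[measurable]: "g' \<in> borel_measurable M"
    and onto: "\<And>y. y \<in> space M \<Longrightarrow> \<exists>x\<in>space N. T x = y"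
    and f'T: "\<And>x. x \<in> space N \<Longrightarrow> f' (T x) = f x" and g'T: "\<And>x. x \<in> space N \<Longrightarrow> g' (T x) = g x"
  shows "gaussian_loss M f' g' \<eta>"
proof -
  note L = loss[unfolded gaussian_loss_def]
  have [measurable]: "f \<in> borel_measurable N" "g \<in> borel_measurable N"
    using L by auto
  have [measurable]: "f' \<in> borel_measurable M'" "g' \<in> borel_measurable M'"
    using f' g' unfolding M by simp_all
  have density_f': "density M f' = distr (density N f) M' T"
    and density_g': "density M g' = distr (density N g) M' T"
    unfolding M using f'T g'T by (auto intro!: density_distr_eq_distr_density)
  have "distributed (density M f') lborel (\<lambda>y. ln (f' y / g' y)) (normal_density \<eta> (sqrt (2 * \<eta>)))"
    if "\<eta> > 0"
  proof -
    have "distr (density M f') lborel (\<lambda>y. ln (f' y / g' y))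
        = distr (density N f) lborel ((\<lambda>y. ln (f' y / g' y)) \<circ> T)"
      unfolding density_f' by (subst distr_distr) auto
    also have "\<dots> = distr (density N f) lborel (\<lambda>x. ln (f x / g x))"
      using f'T g'T by (intro distr_cong) auto
    finally show ?thesis
      using L that unfolding distributed_def M by auto
  qed
  moreover have "prob_space (density M f')" "prob_space (density M g')"
    unfolding density_f' density_g' using L by (auto intro!: prob_space.prob_space_distr)
  moreover have "\<forall>y\<in>space M. f' y > 0 \<and> g' y > 0" "\<eta> = 0 \<Longrightarrow> \<forall>y\<in>space M. f' y = g' y"
    using onto f'T g'T L by fastforce+
  ultimately show ?thesis
    unfolding gaussian_loss_def using f' g' L by auto
qed

lemma gaussian_loss_gauss:
  fixes \<mu> \<mu>' :: "real^'n"
  assumes "\<sigma> > 0"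
  shows "gaussian_loss lborel (\<lambda>y. \<Prod>j\<in>UNIV. normal_density (\<mu> $ j) \<sigma> (y $ j))
     (\<lambda>y. \<Prod>j\<in>UNIV. normal_density (\<mu>' $ j) \<sigma> (y $ j)) ((norm (\<mu> - \<mu>'))\<^sup>2 / (2 * \<sigma>\<^sup>2))"
proof (rule gaussian_loss_distr[OF _ lborel_vec_eq_distr_PiM measurable_vec_lambda_PiM])
  have "(\<Sum>j\<in>UNIV. (\<mu> $ j - \<mu>' $ j)\<^sup>2 / (2 * \<sigma>\<^sup>2)) = (norm (\<mu> - \<mu>'))\<^sup>2 / (2 * \<sigma>\<^sup>2)"
    by (simp add: norm_vec_def L2_set_def sum_divide_distrib[symmetric] sum_nonneg)
  then show "gaussian_loss (PiM UNIV (\<lambda>_::'n. lborel)) (\<lambda>x. \<Prod>j\<in>UNIV. normal_density (\<mu> $ j) \<sigma> (x j))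
      (\<lambda>x. \<Prod>j\<in>UNIV. normal_density (\<mu>' $ j) \<sigma> (x j)) ((norm (\<mu> - \<mu>'))\<^sup>2 / (2 * \<sigma>\<^sup>2))"
    using gaussian_loss_PiM[OF product_sigma_finite_lborel finite_class.finite_UNIV, of "\<lambda>j. normal_density (\<mu> $ j) \<sigma>"
        "\<lambda>j. normal_density (\<mu>' $ j) \<sigma>" "\<lambda>j. (\<mu> $ j - \<mu>' $ j)\<^sup>2 / (2 * \<sigma>\<^sup>2)"]
      gaussian_loss_normal[OF assms] by simp
  show "\<exists>x\<in>space (PiM UNIV (\<lambda>_::'n. lborel)). (\<chi> j. x j) = y" for y :: "real^'n"
    by (rule bexI[of _ "\<lambda>j. y $ j"]) (auto simp: space_PiM)
qed auto

section \<open>Post-processing\<close>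

lemma step_function_bounds:
  fixes n :: nat and t :: real
  assumes "n > 0" "0 \<le> t" "t \<le> 1"
  shows "t \<le> (\<Sum>k<n. of_bool (real k / n < t)) / n" "(\<Sum>k<n. of_bool (real k / n < t)) / n \<le> t + 1 / n"
proof -
  define m where "m = nat \<lceil>n * t\<rceil>"
  have iff: "real k / n < t \<longleftrightarrow> k < m" for k
  proof -
    have "real k / n < t \<longleftrightarrow> real k < t * n"
      using assms(1) by (intro pos_divide_less_eq) simp
    also have "\<dots> \<longleftrightarrow> int k < \<lceil>n * t\<rceil>"
      by (simp add: less_ceiling_iff mult.commute)
    also have "\<dots> \<longleftrightarrow> k < m"
      unfolding m_def by (rule zless_nat_eq_int_zless[symmetric])
    finally show ?thesis .
  qed
  have "real n * t \<le> real n"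
    using assms by (simp add: mult_left_le)
  then have "m \<le> n"
    unfolding m_def by (simp add: ceiling_le_iff nat_le_iff)
  then have "{k. k < n \<and> real k / n < t} = {..<m}"
    unfolding iff by auto
  then have "(\<Sum>k<n. of_bool (real k / n < t) :: real) = real_of_int \<lceil>n * t\<rceil>"
    using assms(2) by (simp add: Int_def lessThan_def m_def)
  moreover have "t * n \<le> real_of_int \<lceil>n * t\<rceil>" "real_of_int \<lceil>n * t\<rceil> \<le> (t + 1 / n) * n"
    using assms(1) ceiling_correct[of "n * t"] by (simp_all add: mult.commute distrib_left)
  ultimately show "t \<le> (\<Sum>k<n. of_bool (real k / n < t)) / n" "(\<Sum>k<n. of_bool (real k / n < t)) / n \<le> t + 1 / n"
    using assms(1) by (simp_all add: pos_le_divide_eq pos_divide_le_eq)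
qed

lemma integral_average_indicators:
  fixes A :: "nat \<Rightarrow> 'a set"
  assumes "finite_measure P" "\<And>k. A k \<in> sets P"
  shows "integrable P (\<lambda>x. (\<Sum>k<n. indicator (A k) x) / real n)"
    and "(\<integral>x. (\<Sum>k<n. indicator (A k) x) / real n \<partial>P) = (\<Sum>k<n. measure P (A k)) / n"
proof -
  interpret finite_measure P by fact
  show "integrable P (\<lambda>x. (\<Sum>k<n. indicator (A k) x) / real n)"
    "(\<integral>x. (\<Sum>k<n. indicator (A k) x) / real n \<partial>P) = (\<Sum>k<n. measure P (A k)) / n"
    using assms(2) by (simp_all add: integral_sum emeasure_eq_measure)
qed

text \<open>Approximate \<open>h\<close> from above by the step function \<open>(1/n) \<Sum>k<n. indicator {h > k/n}\<close>,
  whose integral is a combination of measures of events.\<close>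

lemma dp_indist_integral_approx:
  fixes h :: "'a \<Rightarrow> real" and n :: nat
  assumes M: "prob_space M" and M': "prob_space M'" and sets_eq: "sets M' = sets M"
    and dp: "dp_indist M M' \<epsilon> \<delta>"
    and [measurable]: "h \<in> borel_measurable M" and h01: "\<And>x. x \<in> space M \<Longrightarrow> 0 \<le> h x \<and> h x \<le> 1"
    and n: "n > 0"
  shows "(\<integral>x. h x \<partial>M) \<le> exp \<epsilon> * (\<integral>x. h x \<partial>M') + \<delta> + exp \<epsilon> / n"
proof -
  interpret M: prob_space M by fact
  interpret M': prob_space M' by fact
  have space_eq: "space M' = space M"
    using sets_eq by (rule sets_eq_imp_space_eq)
  define A where "A k = {y\<in>space M. real k / n < h y}" for k :: nat
  have A[measurable]: "A k \<in> sets M" "A k \<in> sets M'" for k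
    unfolding A_def sets_eq by measurable
  define c where "c x = (\<Sum>k<n. indicator (A k) x) / real n" for x
  have c_bounds: "h x \<le> c x" "c x \<le> h x + 1 / n" if "x \<in> space M" for x
  proof -
    have "c x = (\<Sum>k<n. of_bool (real k / n < h x)) / n"
      unfolding c_def using that by (simp add: A_def indicator_def)
    then show "h x \<le> c x" "c x \<le> h x + 1 / n"
      using step_function_bounds[OF n] h01[OF that] by simp_all
  qed
  note c = integral_average_indicators[of M A n, OF M.finite_measure_axioms A(1), folded c_def]
    integral_average_indicators[of M' A n, OF M'.finite_measure_axioms A(2), folded c_def]
  have "integrable M h" "integrable M' h"
    using h01 space_eq sets_eq by (auto intro!: M.integrable_const_bound[where B=1]
        M'.integrable_const_bound[where B=1] cong: measurable_cong_sets)
  have "(\<integral>x. h x \<partial>M) \<le> (\<integral>x. c x \<partial>M)"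
    using c_bounds c(1) \<open>integrable M h\<close> by (intro integral_mono_AE) (auto intro!: AE_I2)
  also have "\<dots> \<le> (\<Sum>k<n. exp \<epsilon> * measure M' (A k) + \<delta>) / n"
    using dp unfolding c(2) dp_indist_def by (intro divide_right_mono sum_mono) auto
  also have "\<dots> = exp \<epsilon> * (\<integral>x. c x \<partial>M') + \<delta>"
    using n by (simp add: c(4) sum.distrib sum_distrib_left[symmetric] field_simps)
  also have "(\<integral>x. c x \<partial>M') \<le> (\<integral>x. h x + 1 / n \<partial>M')"
    using c_bounds space_eq c(3) \<open>integrable M' h\<close> by (intro integral_mono_AE) (auto intro!: AE_I2)
  also have "\<dots> = (\<integral>x. h x \<partial>M') + 1 / n"
    using \<open>integrable M' h\<close> by (simp add: M'.prob_space)
  finally show ?thesis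
    by (simp add: distrib_left add_ac)
qed

lemma dp_indist_integral:
  fixes h :: "'a \<Rightarrow> real"
  assumes "prob_space M" "prob_space M'" "sets M' = sets M" "dp_indist M M' \<epsilon> \<delta>"
    and "h \<in> borel_measurable M" "\<And>x. x \<in> space M \<Longrightarrow> 0 \<le> h x \<and> h x \<le> 1"
  shows "(\<integral>x. h x \<partial>M) \<le> exp \<epsilon> * (\<integral>x. h x \<partial>M') + \<delta>"
proof (rule field_le_epsilon)
  fix e :: real assume e: "e > 0"
  obtain n :: nat where n: "exp \<epsilon> / e < n"
    using reals_Archimedean2 by blast
  then have "n > 0"
    using e by (metis exp_gt_zero divide_pos_pos of_nat_0_less_iff order.strict_trans)
  moreover have "exp \<epsilon> / n \<le> e"
    using n e \<open>n > 0\<close> by (simp add: field_simps)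
  ultimately show "(\<integral>x. h x \<partial>M) \<le> exp \<epsilon> * (\<integral>x. h x \<partial>M') + \<delta> + e"
    using dp_indist_integral_approx[OF assms, of n] by linarith
qed

lemma measure_bind_eq_integral:
  assumes "prob_space M" and K[measurable]: "K \<in> measurable M (subprob_algebra N)" and T: "T \<in> sets N"
  shows "measure (M \<bind> K) T = (\<integral>x. measure (K x) T \<partial>M)"
proof -
  interpret M: prob_space M by fact
  have K_sub: "subprob_space (K x)" if "x \<in> space M" for x
    using measurable_space[OF K that] by (simp add: space_subprob_algebra)
  have [measurable]: "(\<lambda>x. measure (K x) T) \<in> borel_measurable M"
    unfolding measure_def using T by measurable
  have "emeasure (M \<bind> K) T = (\<integral>\<^sup>+x. emeasure (K x) T \<partial>M)"
    using M.not_empty T by (intro emeasure_bind) auto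
  also have "\<dots> = (\<integral>\<^sup>+x. ennreal (measure (K x) T) \<partial>M)"
    using K_sub by (intro nn_integral_cong) (simp add: subprob_space.emeasure_subprob_space_less_top emeasure_eq_ennreal_measure)
  also have "\<dots> = ennreal (\<integral>x. measure (K x) T \<partial>M)"
    using K_sub subprob_space.subprob_measure_le_1
    by (intro nn_integral_eq_integral M.integrable_const_bound[where B=1]) auto
  finally show ?thesis
    by (simp add: measure_def integral_nonneg_AE)
qed

lemma dp_indist_bind:
  assumes M: "prob_space M" and M': "prob_space M'" and sets_eq: "sets M' = sets M"
    and dp: "dp_indist M M' \<epsilon> \<delta>" and K: "K \<in> measurable M (subprob_algebra N)"
  shows "dp_indist (M \<bind> K) (M' \<bind> K) \<epsilon> \<delta>"
  unfolding dp_indist_def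
proof
  fix T assume "T \<in> sets (M \<bind> K)"
  then have T: "T \<in> sets N"
    using K prob_space.not_empty[OF M] by (simp add: sets_bind_measurable)
  have K': "K \<in> measurable M' (subprob_algebra N)"
    using K sets_eq by (simp cong: measurable_cong_sets)
  have [measurable]: "(\<lambda>x. measure (K x) T) \<in> borel_measurable M"
    unfolding measure_def using K T by measurable
  have "K x \<in> space (subprob_algebra N)" if "x \<in> space M" for x
    using K that by (rule measurable_space)
  then have "0 \<le> measure (K x) T \<and> measure (K x) T \<le> 1" if "x \<in> space M" for x
    using that by (simp add: space_subprob_algebra subprob_space.subprob_measure_le_1)
  then show "measure (M \<bind> K) T \<le> exp \<epsilon> * measure (M' \<bind> K) T + \<delta>"
    unfolding measure_bind_eq_integral[OF M K T] measure_bind_eq_integral[OF M' K' T]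
    by (intro dp_indist_integral[OF M M' sets_eq dp]) auto
qed

lemma diff_private_bind:
  assumes "\<And>x. prob_space (M x)" "\<And>x. sets (M x) = sets B"
    and "diff_private Adj M \<epsilon> \<delta>" and "K \<in> measurable B (subprob_algebra N)"
  shows "diff_private Adj (\<lambda>x. M x \<bind> K) \<epsilon> \<delta>"
  using assms unfolding diff_private_iff_dp_indist
  by (auto intro!: dp_indist_bind simp: measurable_cong_sets[OF assms(2) refl])

section \<open>Extension from cylinders to the product sigma-algebra\<close>

lemma (in finite_measure) tendsto_measure_Diff_UN_lessThan:
  fixes a :: "nat \<Rightarrow> 'a set"
  assumes "\<And>i. a i \<in> sets M"
  shows "(\<lambda>n. measure M ((\<Union>i. a i) - (\<Union>i<n. a i))) \<longlonglongrightarrow> 0"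
proof -
  have "decseq (\<lambda>n. (\<Union>i. a i) - (\<Union>i<n. a i))"
    unfolding decseq_def by auto
  then have "(\<lambda>n. measure M ((\<Union>i. a i) - (\<Union>i<n. a i))) \<longlonglongrightarrow> measure M (\<Inter>n. (\<Union>i. a i) - (\<Union>i<n. a i))"
    using assms by (intro finite_Lim_measure_decseq) auto
  moreover have "(\<Inter>n. (\<Union>i. a i) - (\<Union>i<n. a i)) = {}"
    by blast
  ultimately show ?thesis
    by (simp only: measure_empty)
qed

lemma (in finite_measure) measure_sym_diff_UN_le:
  fixes a B :: "nat \<Rightarrow> 'a set"
  assumes "\<And>i. a i \<in> sets M" "\<And>i. B i \<in> sets M"
  shows "measure M (sym_diff (\<Union>i. a i) (\<Union>i<n. B i))
    \<le> measure M ((\<Union>i. a i) - (\<Union>i<n. a i)) + (\<Sum>i<n. measure M (sym_diff (a i) (B i)))"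
proof -
  have "(\<Union>i. a i) \<in> sets M"
    using assms by (intro sets.countable_UN) auto
  moreover have "(\<Union>i<n. a i) \<in> sets M" "(\<Union>i<n. sym_diff (a i) (B i)) \<in> sets M"
    using assms by (auto intro!: sets.finite_UN sets.Un sets.Diff)
  ultimately have sets: "(\<Union>i. a i) - (\<Union>i<n. a i) \<in> sets M" "(\<Union>i<n. sym_diff (a i) (B i)) \<in> sets M"
    by auto
  have "measure M (sym_diff (\<Union>i. a i) (\<Union>i<n. B i))
      \<le> measure M (((\<Union>i. a i) - (\<Union>i<n. a i)) \<union> (\<Union>i<n. sym_diff (a i) (B i)))"
    using sets by (intro finite_measure_mono) auto
  also have "\<dots> \<le> measure M ((\<Union>i. a i) - (\<Union>i<n. a i)) + measure M (\<Union>i<n. sym_diff (a i) (B i))"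
    using sets by (intro measure_Un_le) auto
  also have "measure M (\<Union>i<n. sym_diff (a i) (B i)) \<le> (\<Sum>i<n. measure M (sym_diff (a i) (B i)))"
    using assms by (intro measure_UNION_le) auto
  finally show ?thesis
    by simp
qed

lemma approx_by_algebra_UN:
  fixes a :: "nat \<Rightarrow> 'a set"
  assumes A: "algebra \<Omega> A" and fin: "finite Ms"
    and Ms: "\<And>M. M \<in> Ms \<Longrightarrow> finite_measure M \<and> sets M = sigma_sets \<Omega> A"
    and a: "\<And>i. a i \<in> sigma_sets \<Omega> A"
    and approx: "\<And>i e. e > 0 \<Longrightarrow> \<exists>B\<in>A. \<forall>M\<in>Ms. measure M (sym_diff (a i) B) < e"
    and "e > 0"
  shows "\<exists>B\<in>A. \<forall>M\<in>Ms. measure M (sym_diff (\<Union>i. a i) B) < e"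
proof -
  interpret A: algebra \<Omega> A by fact
  have a_sets: "a i \<in> sets M" if "M \<in> Ms" for M i
    using a Ms[OF that] by simp
  have "(\<lambda>n. measure M ((\<Union>i. a i) - (\<Union>i<n. a i))) \<longlonglongrightarrow> 0" if "M \<in> Ms" for M
    using Ms[OF that] a_sets[OF that] by (intro finite_measure.tendsto_measure_Diff_UN_lessThan) auto
  then have "eventually (\<lambda>n. \<forall>M\<in>Ms. measure M ((\<Union>i. a i) - (\<Union>i<n. a i)) < e / 2) sequentially"
    using fin \<open>e > 0\<close> by (intro eventually_ball_finite ballI order_tendstoD(2)) auto
  then obtain n where n: "\<And>M. M \<in> Ms \<Longrightarrow> measure M ((\<Union>i. a i) - (\<Union>i<n. a i)) < e / 2"
    by (auto simp: eventually_sequentially)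
  define e' where "e' = e / (2 * (n + 1))"
  have "e' > 0" "n * e' \<le> e / 2"
    using \<open>e > 0\<close> by (auto simp: e'_def field_simps)
  then have "\<forall>i. \<exists>B\<in>A. \<forall>M\<in>Ms. measure M (sym_diff (a i) B) < e'"
    using approx by blast
  then obtain B where B: "\<And>i. B i \<in> A" "\<And>i M. M \<in> Ms \<Longrightarrow> measure M (sym_diff (a i) (B i)) < e'"
    by metis
  have "measure M (sym_diff (\<Union>i. a i) (\<Union>i<n. B i)) < e" if M: "M \<in> Ms" for M
  proof -
    have "(\<Sum>i<n. measure M (sym_diff (a i) (B i))) \<le> (\<Sum>i<n. e')"
      using B(2)[OF M] by (intro sum_mono less_imp_le)
    then show ?thesis
      using finite_measure.measure_sym_diff_UN_le[of M a B n] Ms[OF M] a_sets[OF M] B(1) n[OF M]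
        \<open>n * e' \<le> e / 2\<close>
      by auto
  qed
  moreover have "(\<Union>i<n. B i) \<in> A"
    using B(1) by blast
  ultimately show ?thesis
    by blast
qed

lemma sigma_sets_approx_by_algebra:
  assumes A: "algebra \<Omega> A" and fin: "finite Ms"
    and Ms: "\<And>M. M \<in> Ms \<Longrightarrow> finite_measure M \<and> sets M = sigma_sets \<Omega> A"
    and S: "S \<in> sigma_sets \<Omega> A" and "e > 0"
  shows "\<exists>B\<in>A. \<forall>M\<in>Ms. measure M (sym_diff S B) < e"
proof -
  interpret A: algebra \<Omega> A by fact
  from S have "\<forall>e>0. \<exists>B\<in>A. \<forall>M\<in>Ms. measure M (sym_diff S B) < e"
  proof (induction rule: sigma_sets.induct)
    case (Compl a)
    have "a \<subseteq> \<Omega>"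
      using A.space_closed Compl(1) by (rule sigma_sets_into_sp)
    then have "sym_diff (\<Omega> - a) (\<Omega> - B) = sym_diff a B" if "B \<in> A" for B
      using that A.space_closed by blast
    then show ?case
      using Compl(2) by (metis A.compl_sets)
  next
    case (Union a)
    then show ?case
      using A fin Ms by (blast intro: approx_by_algebra_UN)
  qed force+
  then show ?thesis
    using \<open>e > 0\<close> by blast
qed

lemma measure_le_affine_sigma_sets:
  assumes A: "algebra \<Omega> A" and M: "finite_measure M" "sets M = sigma_sets \<Omega> A"
    and M': "finite_measure M'" "sets M' = sigma_sets \<Omega> A"
    and le: "\<And>X. X \<in> A \<Longrightarrow> measure M X \<le> c * measure M' X + d" and "c \<ge> 0"
    and S: "S \<in> sets M"
  shows "measure M S \<le> c * measure M' S + d"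
proof (rule field_le_epsilon)
  interpret M: finite_measure M by fact
  interpret M': finite_measure M' by fact
  fix e :: real assume "e > 0"
  then have "e / (c + 1) > 0"
    using \<open>c \<ge> 0\<close> by simp
  then have "\<exists>B\<in>A. \<forall>N\<in>{M, M'}. measure N (sym_diff S B) < e / (c + 1)"
    using M M' S by (intro sigma_sets_approx_by_algebra[OF A]) auto
  then obtain B where B: "B \<in> A" "measure M (sym_diff S B) < e / (c + 1)" "measure M' (sym_diff S B) < e / (c + 1)"
    by auto
  have [simp]: "B \<in> sets M" "B \<in> sets M'" "S \<in> sets M'"
    using B(1) S M(2) M'(2) by auto
  then have [simp]: "sym_diff S B \<in> sets M" "sym_diff S B \<in> sets M'"
    using S by (auto intro!: sets.Un sets.Diff)
  have "measure M S \<le> measure M (B \<union> sym_diff S B)"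
    by (rule M.finite_measure_mono) auto
  also have "\<dots> \<le> measure M B + measure M (sym_diff S B)"
    by (rule measure_Un_le) auto
  finally have M_S: "measure M S \<le> measure M B + measure M (sym_diff S B)" .
  have "measure M' B \<le> measure M' (S \<union> sym_diff S B)"
    by (rule M'.finite_measure_mono) auto
  also have "\<dots> \<le> measure M' S + measure M' (sym_diff S B)"
    by (rule measure_Un_le) auto
  finally have "measure M' B \<le> measure M' S + e / (c + 1)"
    using B(3) by linarith
  then have "c * measure M' B \<le> c * (measure M' S + e / (c + 1))"
    using \<open>c \<ge> 0\<close> by (rule mult_left_mono)
  moreover have "c * (e / (c + 1)) + e / (c + 1) = (c + 1) * (e / (c + 1))"
    by (simp only: distrib_right mult_1)
  moreover have "(c + 1) * (e / (c + 1)) = e"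
    using \<open>c \<ge> 0\<close> by simp
  ultimately show "measure M S \<le> c * measure M' S + d + e"
    using M_S le[OF B(1)] B(2) by (simp add: distrib_left)
qed

lemma dp_indist_PiM_if_finite_marginals:
  fixes M M' :: "'i \<Rightarrow> 'a measure"
  assumes M: "\<And>i. prob_space (M i)" and M': "\<And>i. prob_space (M' i)" and sets_eq: "\<And>i. sets (M' i) = sets (M i)"
    and marginals: "\<And>J. finite J \<Longrightarrow> J \<subseteq> I \<Longrightarrow> dp_indist (PiM J M) (PiM J M') \<epsilon> \<delta>"
  shows "dp_indist (PiM I M) (PiM I M') \<epsilon> \<delta>"
proof -
  interpret P: product_prob_space M I
    unfolding product_prob_space_def product_prob_space_axioms_def product_sigma_finite_def
    using M by (auto intro: prob_space_imp_sigma_finite)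
  interpret P': product_prob_space M' I
    unfolding product_prob_space_def product_prob_space_axioms_def product_sigma_finite_def
    using M' by (auto intro: prob_space_imp_sigma_finite)
  have sets_PiM_eq: "sets (PiM J M') = sets (PiM J M)" for J
    using sets_eq by (intro sets_PiM_cong) auto
  have "space (M' i) = space (M i)" for i
    using sets_eq by (rule sets_eq_imp_space_eq)
  then have emb_eq: "prod_emb I M' J X = prod_emb I M J X" for J X
    unfolding prod_emb_def by simp
  have cylinders: "measure (PiM I M) X \<le> exp \<epsilon> * measure (PiM I M') X + \<delta>" if "X \<in> P.generator" for X
    using that
  proof cases
    case (1 J Y)
    have "measure (PiM I M) X = measure (PiM J M) Y"
      unfolding 1(1) measure_def using P.emeasure_PiM_emb'[OF 1(3,2,4)] by simp
    moreover have "measure (PiM I M') X = measure (PiM J M') Y"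
      unfolding 1(1) measure_def emb_eq[symmetric] using P'.emeasure_PiM_emb'[OF 1(3,2)] 1(4) sets_PiM_eq
      by simp
    ultimately show ?thesis
      using marginals[OF 1(2,3)] 1(4) by (simp add: dp_indist_def)
  qed
  have "sets (PiM I M') = sigma_sets (space (PiM I M)) P.generator"
    using sets_PiM_eq P.sets_PiM_generator by simp
  then show ?thesis
    unfolding dp_indist_def
    using measure_le_affine_sigma_sets[OF P.algebra_generator P.finite_measure_axioms P.sets_PiM_generator
        P'.finite_measure_axioms _ cylinders]
    by simp
qed

section \<open>The largest singular value\<close>

lemma inner_transpose_mult_matrix:
  fixes C :: "real^'n^'q"
  shows "((transpose C ** C) *v v) \<bullet> w = (C *v v) \<bullet> (C *v w)"
proof -
  have "(transpose C *v u) \<bullet> w = u \<bullet> (C *v w)" for u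
    by (simp add: dot_lmul_matrix)
  then show ?thesis
    by (simp only: matrix_vector_mul_assoc[symmetric])
qed

lemma eigenvectors_transpose_mult_orthogonal:
  fixes C :: "real^'n^'q"
  assumes "(transpose C ** C) *v v = e *\<^sub>R v" "(transpose C ** C) *v w = e' *\<^sub>R w" "e \<noteq> e'"
  shows "v \<bullet> w = 0"
proof -
  have "e * (v \<bullet> w) = (C *v v) \<bullet> (C *v w)"
    using inner_transpose_mult_matrix[of C v w] assms(1) by simp
  also have "\<dots> = e' * (v \<bullet> w)"
    using inner_transpose_mult_matrix[of C w v] assms(2) by (simp add: inner_commute)
  finally have "(e - e') * (v \<bullet> w) = 0"
    by (simp add: left_diff_distrib)
  then show ?thesis
    using assms(3) by simp
qed

lemma finite_eigenvalues_transpose_mult: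
  fixes C :: "real^'n^'q"
  shows "finite {e. \<exists>v. v \<noteq> 0 \<and> (transpose C ** C) *v v = e *\<^sub>R v}"
proof -
  let ?E = "{e. \<exists>v. v \<noteq> 0 \<and> (transpose C ** C) *v v = e *\<^sub>R v}"
  define ev where "ev e = (SOME v. v \<noteq> 0 \<and> (transpose C ** C) *v v = e *\<^sub>R v)" for e
  have ev: "ev e \<noteq> 0 \<and> (transpose C ** C) *v ev e = e *\<^sub>R ev e" if "e \<in> ?E" for e
  proof -
    from that obtain v where "v \<noteq> 0 \<and> (transpose C ** C) *v v = e *\<^sub>R v"
      by blast
    then show ?thesis
      unfolding ev_def by (rule someI)
  qed
  have orth: "ev e \<bullet> ev e' = 0" if "e \<in> ?E" "e' \<in> ?E" "e \<noteq> e'" for e e'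
    using ev[OF that(1)] ev[OF that(2)] that(3) by (intro eigenvectors_transpose_mult_orthogonal) auto
  have "inj_on ev ?E"
  proof (rule inj_onI, rule ccontr)
    fix e e' assume e: "e \<in> ?E" "e' \<in> ?E" "ev e = ev e'" "e \<noteq> e'"
    then have "ev e \<bullet> ev e = 0"
      using orth[OF e(1,2,4)] by simp
    then show False
      using ev[OF e(1)] by simp
  qed
  have "finite ?E \<and> card ?E \<le> DIM(real^'n)"
  proof (rule finite_if_finite_subsets_card_bdd)
    fix G assume G: "G \<subseteq> ?E" "finite G"
    have "independent (ev ` G)"
    proof (rule pairwise_orthogonal_independent)
      show "pairwise orthogonal (ev ` G)"
        unfolding pairwise_def orthogonal_def using G orth by blast
      show "0 \<notin> ev ` G"
        using G ev by force
    qed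
    then have "card (ev ` G) \<le> DIM(real^'n)"
      using independent_bound by blast
    moreover have "card (ev ` G) = card G"
      using \<open>inj_on ev ?E\<close> G by (intro card_image) (auto intro: inj_on_subset)
    ultimately show "card G \<le> DIM(real^'n)"
      by simp
  qed
  then show ?thesis
    by simp
qed

text \<open>If \<open>B v \<noteq> 0\<close>, the form is negative at \<open>v + t B v\<close> for a suitable \<open>t < 0\<close>.\<close>

lemma psd_form_eq_0_imp_kernel:
  fixes B :: "'a::real_inner \<Rightarrow> 'a"
  assumes "linear B" and psd: "\<And>v. B v \<bullet> v \<ge> 0" and sym: "\<And>v w. B v \<bullet> w = B w \<bullet> v"
    and zero: "B v \<bullet> v = 0"
  shows "B v = 0"
proof (rule ccontr)
  assume "B v \<noteq> 0"
  define u where "u = B v"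
  define a where "a = u \<bullet> u"
  define c where "c = B u \<bullet> u"
  define t where "t = - a / (c + 1)"
  have a: "a > 0"
    using \<open>B v \<noteq> 0\<close> unfolding a_def u_def by simp
  have c: "c \<ge> 0"
    unfolding c_def using psd by simp
  have t: "t < 0"
    unfolding t_def using a c by simp
  have "a * (c / (c + 1)) \<le> a"
    using a c by (simp add: pos_divide_le_eq algebra_simps)
  then have tc: "t * c \<ge> - a"
    unfolding t_def by simp
  have "B (v + t *\<^sub>R u) \<bullet> (v + t *\<^sub>R u) = B v \<bullet> v + t * (B v \<bullet> u) + t * (B u \<bullet> v) + t * t * (B u \<bullet> u)"
    using \<open>linear B\<close> by (simp add: linear_add linear_scale inner_add_left inner_add_right algebra_simps)
  also have "\<dots> = t * (2 * a + t * c)"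
    using zero sym[of u v] unfolding a_def c_def u_def by (simp add: algebra_simps)
  also have "\<dots> < 0"
    using t tc a by (intro mult_neg_pos) auto
  finally show False
    using psd[of "v + t *\<^sub>R u"] by simp
qed

lemma Rayleigh_quotient_attains_max:
  fixes C :: "real^'n^'q"
  obtains v0 where "norm v0 = 1" "\<And>v. (norm (C *v v))\<^sup>2 \<le> (norm (C *v v0))\<^sup>2 * (norm v)\<^sup>2"
proof -
  define f where "f v = (norm (C *v v))\<^sup>2" for v :: "real^'n"
  have "continuous_on (sphere 0 1) f"
    unfolding f_def by (intro continuous_intros linear_continuous_on matrix_vector_mul_bounded_linear)
  moreover have "sphere (0::real^'n) 1 \<noteq> {}"
    using norm_axis_1 by (metis mem_sphere_0 empty_iff)
  ultimately obtain v0 where v0: "norm v0 = 1" and max: "\<And>y. norm y = 1 \<Longrightarrow> f y \<le> f v0"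
    using continuous_attains_sup[OF compact_sphere] by (metis mem_sphere_0)
  have "f v \<le> f v0 * (norm v)\<^sup>2" for v
  proof (cases "v = 0")
    case False
    have "f ((1 / norm v) *\<^sub>R v) = f v / (norm v)\<^sup>2"
      unfolding f_def by (simp add: matrix_vector_mult_scaleR power_divide)
    moreover have "f ((1 / norm v) *\<^sub>R v) \<le> f v0"
      using False max by simp
    ultimately show ?thesis
      using False by (simp add: divide_le_eq)
  qed (simp add: f_def)
  with v0 show ?thesis
    unfolding f_def by (rule that)
qed

text \<open>The maximiser of the Rayleigh quotient is an eigenvector of \<open>C\<^sup>T C\<close>, so the maximum is
  at most the largest eigenvalue.\<close>

lemma norm_matrix_vector_le_s1:
  fixes C :: "real^'n^'q"
  shows "norm (C *v v) \<le> s1 C * norm v"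
proof -
  let ?A = "transpose C ** C"
  obtain v0 where v0: "norm v0 = 1" and bound: "\<And>v. (norm (C *v v))\<^sup>2 \<le> (norm (C *v v0))\<^sup>2 * (norm v)\<^sup>2"
    using Rayleigh_quotient_attains_max[of C] by blast
  define lam where "lam = (norm (C *v v0))\<^sup>2"
  define B where "B v = lam *\<^sub>R v - ?A *v v" for v
  have B_inner: "B v \<bullet> w = lam * (v \<bullet> w) - (C *v v) \<bullet> (C *v w)" for v w
    unfolding B_def by (simp add: inner_transpose_mult_matrix inner_diff_left)
  have "B v0 = 0"
  proof (rule psd_form_eq_0_imp_kernel[of B])
    show "linear B"
      unfolding B_def[abs_def] by (intro linear_compose_sub linear_scale_self matrix_vector_mul_linear)
    show "B v \<bullet> v \<ge> 0" for v
      using bound[of v] by (simp add: B_inner lam_def power2_norm_eq_inner)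
    show "B v \<bullet> w = B w \<bullet> v" for v w
      unfolding B_inner by (simp add: inner_commute)
    show "B v0 \<bullet> v0 = 0"
      using v0 by (simp add: B_inner lam_def power2_norm_eq_inner norm_eq_1)
  qed
  then have "lam \<in> {e. \<exists>v. v \<noteq> 0 \<and> ?A *v v = e *\<^sub>R v}"
    using v0 unfolding B_def by (intro CollectI exI[of _ v0]) auto
  then have "lam \<le> Max {e. \<exists>v. v \<noteq> 0 \<and> ?A *v v = e *\<^sub>R v}"
    using finite_eigenvalues_transpose_mult by (intro Max_ge)
  then have "sqrt lam \<le> s1 C"
    unfolding s1_def by simp
  have "norm (C *v v) = sqrt ((norm (C *v v))\<^sup>2)"
    by simp
  also have "\<dots> \<le> sqrt (lam * (norm v)\<^sup>2)"
    using bound unfolding lam_def by (rule real_sqrt_le_mono)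
  also have "\<dots> = sqrt lam * norm v"
    by (simp add: real_sqrt_mult)
  also have "\<dots> \<le> s1 C * norm v"
    using \<open>sqrt lam \<le> s1 C\<close> by (simp add: mult_right_mono)
  finally show ?thesis .
qed

section \<open>The privatized mechanisms\<close>

lemma sets_gauss [measurable_cong, simp]: "sets (gauss \<mu> \<sigma>) = sets borel"
  by (simp add: gauss_def)

lemma gauss_eq_density:
  "\<sigma> \<noteq> 0 \<Longrightarrow> gauss \<mu> \<sigma> = density lborel (\<lambda>y. \<Prod>j\<in>UNIV. normal_density (\<mu> $ j) \<sigma> (y $ j))"
  by (simp add: gauss_def)

lemma prob_space_gauss:
  assumes "\<sigma> \<ge> 0"
  shows "prob_space (gauss \<mu> \<sigma>)"
proof (cases "\<sigma> = 0")
  case False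
  then show ?thesis
    using gaussian_loss_gauss[of \<sigma> \<mu> \<mu>] assms by (simp add: gauss_eq_density gaussian_loss_def)
qed (simp add: gauss_def prob_space_return)

lemma prob_space_traj_mech: "\<sigma> \<ge> 0 \<Longrightarrow> prob_space (traj_mech C \<sigma> x)"
  unfolding traj_mech_def by (intro prob_space_PiM prob_space_gauss)

lemma sets_traj_mech: "sets (traj_mech C \<sigma> x) = sets (PiM UNIV (\<lambda>_. borel))"
  unfolding traj_mech_def by (intro sets_PiM_cong) simp_all

lemma dp_indist_gauss:
  fixes \<mu> \<mu>' :: "real^'n"
  assumes "\<sigma> > 0" "\<epsilon> > 0" "0 < \<delta>" "\<delta> < 1" and small: "norm (\<mu> - \<mu>') / \<sigma> \<le> 1 / kappa \<delta> \<epsilon>"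
  shows "dp_indist (gauss \<mu> \<sigma>) (gauss \<mu>' \<sigma>) \<epsilon> \<delta>"
proof -
  have "sqrt (2 * ((norm (\<mu> - \<mu>'))\<^sup>2 / (2 * \<sigma>\<^sup>2))) \<le> 1 / kappa \<delta> \<epsilon>"
    using assms(1) small by (simp add: real_sqrt_divide)
  from dp_indist_if_gaussian_loss[OF gaussian_loss_gauss[OF assms(1)] assms(2-4) this]
  show ?thesis
    using assms(1) by (simp add: gauss_eq_density)
qed

lemma dp_indist_PiM_gauss:
  fixes \<mu> \<mu>' :: "'i \<Rightarrow> real^'n"
  assumes "finite J" "\<sigma> > 0" "\<epsilon> > 0" "0 < \<delta>" "\<delta> < 1"
    and small: "sqrt (\<Sum>k\<in>J. (norm (\<mu> k - \<mu>' k))\<^sup>2) / \<sigma> \<le> 1 / kappa \<delta> \<epsilon>"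
  shows "dp_indist (PiM J (\<lambda>k. gauss (\<mu> k) \<sigma>)) (PiM J (\<lambda>k. gauss (\<mu>' k) \<sigma>)) \<epsilon> \<delta>"
proof -
  define F where "F k y = (\<Prod>j\<in>UNIV. normal_density (\<mu> k $ j) \<sigma> (y $ j))" for k and y :: "real^'n"
  define G where "G k y = (\<Prod>j\<in>UNIV. normal_density (\<mu>' k $ j) \<sigma> (y $ j))" for k and y :: "real^'n"
  define \<eta> where "\<eta> k = (norm (\<mu> k - \<mu>' k))\<^sup>2 / (2 * \<sigma>\<^sup>2)" for k
  have loss: "gaussian_loss lborel (F k) (G k) (\<eta> k)" for k
    unfolding F_def G_def \<eta>_def using assms(2) by (rule gaussian_loss_gauss)
  note L = loss[unfolded gaussian_loss_def]
  have "PiM J (\<lambda>k. gauss (\<mu> k) \<sigma>) = density (PiM J (\<lambda>_. lborel)) (\<lambda>z. \<Prod>k\<in>J. F k (z k))"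
    "PiM J (\<lambda>k. gauss (\<mu>' k) \<sigma>) = density (PiM J (\<lambda>_. lborel)) (\<lambda>z. \<Prod>k\<in>J. G k (z k))"
    using L assms(1,2) unfolding F_def[abs_def] G_def[abs_def]
    by (auto simp: gauss_eq_density less_imp_le prob_space_imp_sigma_finite
        intro!: PiM_density product_sigma_finite_lborel)
  moreover have "sqrt (2 * (\<Sum>k\<in>J. \<eta> k)) = sqrt (\<Sum>k\<in>J. (norm (\<mu> k - \<mu>' k))\<^sup>2) / \<sigma>"
    using assms(2) by (simp add: \<eta>_def sum_divide_distrib[symmetric] real_sqrt_divide)
  ultimately show ?thesis
    using dp_indist_if_gaussian_loss[OF gaussian_loss_PiM[OF product_sigma_finite_lborel assms(1) loss] assms(3-5)]
      small by simp
qed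

lemma s1_nonneg:
  fixes C :: "real^'n^'q"
  shows "s1 C \<ge> 0"
proof -
  obtain v :: "real^'n" where "norm v = 1"
    using norm_axis_1 by blast
  then have "norm (C *v v) \<le> s1 C"
    using norm_matrix_vector_le_s1[of C v] by simp
  then show ?thesis
    using norm_ge_zero order_trans by blast
qed

lemma Adj_traj_imp_sqrt_sum_le:
  assumes "Adj_traj b x x'" "finite J"
  shows "sqrt (\<Sum>k\<in>J. (norm (x k - x' k))\<^sup>2) \<le> b"
proof -
  have "summable (\<lambda>k. (norm (x k - x' k))\<^sup>2)" and b: "sqrt (\<Sum>k. (norm (x k - x' k))\<^sup>2) \<le> b"
    using assms(1) by (auto simp: Adj_traj_def)
  then have "(\<Sum>k\<in>J. (norm (x k - x' k))\<^sup>2) \<le> (\<Sum>k. (norm (x k - x' k))\<^sup>2)"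
    using assms(2) by (intro sum_le_suminf) auto
  then show ?thesis
    using b real_sqrt_le_mono order_trans by blast
qed

lemma dp_indist_traj_mech:
  assumes "\<sigma> > 0" "\<epsilon> > 0" "0 < \<delta>" "\<delta> < 1" and small: "s1 C * b / \<sigma> \<le> 1 / kappa \<delta> \<epsilon>"
    and adj: "Adj_traj b x x'"
  shows "dp_indist (traj_mech C \<sigma> x) (traj_mech C \<sigma> x') \<epsilon> \<delta>"
  unfolding traj_mech_def
proof (rule dp_indist_PiM_if_finite_marginals)
  fix J :: "nat set" assume "finite J"
  have sum_le: "(\<Sum>k\<in>J. (norm (C *v x k - C *v x' k))\<^sup>2) \<le> (\<Sum>k\<in>J. (s1 C)\<^sup>2 * (norm (x k - x' k))\<^sup>2)"
  proof (rule sum_mono)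
    fix k
    have "norm (C *v x k - C *v x' k) \<le> s1 C * norm (x k - x' k)"
      using norm_matrix_vector_le_s1[of C "x k - x' k"] by (simp add: matrix_vector_mult_diff_distrib)
    then show "(norm (C *v x k - C *v x' k))\<^sup>2 \<le> (s1 C)\<^sup>2 * (norm (x k - x' k))\<^sup>2"
      by (metis norm_ge_zero power_mono power_mult_distrib)
  qed
  have "sqrt (\<Sum>k\<in>J. (norm (C *v x k - C *v x' k))\<^sup>2) \<le> s1 C * sqrt (\<Sum>k\<in>J. (norm (x k - x' k))\<^sup>2)"
    using real_sqrt_le_mono[OF sum_le] s1_nonneg[of C] by (simp add: sum_distrib_left[symmetric] real_sqrt_mult)
  also have "\<dots> \<le> s1 C * b"
    using Adj_traj_imp_sqrt_sum_le[OF adj \<open>finite J\<close>] s1_nonneg[of C] by (rule mult_left_mono)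
  finally have "sqrt (\<Sum>k\<in>J. (norm (C *v x k - C *v x' k))\<^sup>2) / \<sigma> \<le> s1 C * b / \<sigma>"
    using assms(1) by (simp add: divide_right_mono)
  then show "dp_indist (PiM J (\<lambda>k. gauss (C *v x k) \<sigma>)) (PiM J (\<lambda>k. gauss (C *v x' k) \<sigma>)) \<epsilon> \<delta>"
    using small by (intro dp_indist_PiM_gauss \<open>finite J\<close> assms(1-4)) simp
qed (use assms(1) in \<open>auto intro: prob_space_gauss\<close>)

lemma diff_private_traj_mech:
  assumes "\<epsilon> > 0" "0 < \<delta>" "\<delta> < 1" "b > 0" and \<sigma>: "\<sigma> \<ge> kappa \<delta> \<epsilon> * s1 C * b"
  shows "diff_private (Adj_traj b) (traj_mech C \<sigma>) \<epsilon> \<delta>"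
  unfolding diff_private_iff_dp_indist
proof (cases "s1 C = 0")
  case True
  then have "C *v v = 0" for v
    using norm_matrix_vector_le_s1[of C v] by simp
  then show "\<forall>x x'. Adj_traj b x x' \<longrightarrow> dp_indist (traj_mech C \<sigma> x) (traj_mech C \<sigma> x') \<epsilon> \<delta>"
    using assms by (simp add: traj_mech_def dp_indist_refl)
next
  case False
  then have "s1 C > 0"
    using s1_nonneg[of C] by simp
  then have "\<sigma> > 0" "s1 C * b / \<sigma> \<le> 1 / kappa \<delta> \<epsilon>"
    using \<sigma> kappa_pos[OF assms(1), of \<delta>] assms(4) by (auto simp: field_simps less_le_trans[OF _ \<sigma>])
  then show "\<forall>x x'. Adj_traj b x x' \<longrightarrow> dp_indist (traj_mech C \<sigma> x) (traj_mech C \<sigma> x') \<epsilon> \<delta>"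
    using assms(1-3) by (auto intro: dp_indist_traj_mech)
qed

lemma diff_private_ref_mech:
  assumes "\<epsilon> > 0" "0 < \<delta>" "\<delta> < 1" "\<beta> > 0" and \<sigma>: "\<sigma> \<ge> kappa \<delta> \<epsilon> * \<beta>"
  shows "diff_private (Adj_static \<beta>) (ref_mech \<sigma>) \<epsilon> \<delta>"
  unfolding diff_private_iff_dp_indist ref_mech_def
proof (intro allI impI dp_indist_gauss assms(1-3))
  have "kappa \<delta> \<epsilon> > 0"
    using kappa_pos[OF assms(1)] .
  then show "\<sigma> > 0"
    using \<sigma> assms(4) by (smt (verit) mult_pos_pos)
  fix r r' :: "real^'a" assume "Adj_static \<beta> r r'"
  then have "norm (r - r') / \<sigma> \<le> \<beta> / \<sigma>"
    using \<open>\<sigma> > 0\<close> by (simp add: Adj_static_def divide_right_mono)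
  also have "\<dots> \<le> 1 / kappa \<delta> \<epsilon>"
    using \<sigma> \<open>\<sigma> > 0\<close> \<open>kappa \<delta> \<epsilon> > 0\<close> by (simp add: field_simps)
  finally show "norm (r - r') / \<sigma> \<le> 1 / kappa \<delta> \<epsilon>" .
qed

theorem theorem1:
  fixes C :: "real^'n^'q"
    and \<epsilon> \<delta> \<epsilon>' \<delta>' b \<beta> \<sigma> \<sigma>' :: real
  assumes "\<epsilon> > 0" "0 < \<delta>" "\<delta> < 1/2"
    and "\<epsilon>' > 0" "0 < \<delta>'" "\<delta>' < 1/2"
    and "b > 0" "\<beta> > 0"
    and "\<sigma> \<ge> kappa \<delta> \<epsilon> * s1 C * b"
    and "\<sigma>' \<ge> kappa \<delta>' \<epsilon>' * \<beta>"
  shows "diff_private (Adj_traj b) (traj_mech C \<sigma>) \<epsilon> \<delta>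
    \<and> (\<forall>(N :: 'c measure) K. K \<in> measurable (PiM UNIV (\<lambda>_::nat. borel)) (subprob_algebra N) \<longrightarrow>
          diff_private (Adj_traj b) (\<lambda>x. traj_mech C \<sigma> x \<bind> K) \<epsilon> \<delta>)
    \<and> diff_private (Adj_static \<beta>) (ref_mech \<sigma>') \<epsilon>' \<delta>'
    \<and> (\<forall>(N :: 'd measure) K. K \<in> measurable (borel :: (real^'n) measure) (subprob_algebra N) \<longrightarrow>
          diff_private (Adj_static \<beta>) (\<lambda>r. ref_mech \<sigma>' r \<bind> K) \<epsilon>' \<delta>')"
proof -
  have "\<sigma> \<ge> 0"
    using assms(7,9) kappa_pos[OF assms(1), of \<delta>] s1_nonneg[of C]
    by (meson less_imp_le mult_nonneg_nonneg order_trans)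
  have "\<sigma>' \<ge> 0"
    using assms(8,10) kappa_pos[OF assms(4), of \<delta>'] by (meson less_imp_le mult_nonneg_nonneg order_trans)
  have traj: "diff_private (Adj_traj b) (traj_mech C \<sigma>) \<epsilon> \<delta>"
    using assms by (intro diff_private_traj_mech) auto
  have ref: "diff_private (Adj_static \<beta>) (ref_mech \<sigma>') \<epsilon>' \<delta>'"
    using assms by (intro diff_private_ref_mech) auto
  show ?thesis
  proof (intro conjI allI impI)
    fix N :: "'c measure" and K :: "(nat \<Rightarrow> real^'q) \<Rightarrow> 'c measure"
    assume "K \<in> measurable (PiM UNIV (\<lambda>_::nat. borel)) (subprob_algebra N)"
    then show "diff_private (Adj_traj b) (\<lambda>x. traj_mech C \<sigma> x \<bind> K) \<epsilon> \<delta>"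
      by (rule diff_private_bind[OF prob_space_traj_mech[OF \<open>\<sigma> \<ge> 0\<close>] sets_traj_mech traj])
  next
    fix N :: "'d measure" and K :: "real^'n \<Rightarrow> 'd measure"
    assume "K \<in> measurable (borel :: (real^'n) measure) (subprob_algebra N)"
    then show "diff_private (Adj_static \<beta>) (\<lambda>r. ref_mech \<sigma>' r \<bind> K) \<epsilon>' \<delta>'"
      by (rule diff_private_bind[OF prob_space_gauss[OF \<open>\<sigma>' \<ge> 0\<close>, folded ref_mech_def] sets_gauss[folded ref_mech_def] ref])
  qed (fact traj ref)+
qed

end
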